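(* There is a one-to-one correspondence between the set of permutations with no $\eta$-inactive sites and the set of primitive ascent sequences.
   Context: For a permutation $\pi$ of $[n]$ and $i\in[n]$, let $J(i)=0$ if $\pi(i)=1$ and otherwise let $J(i)$ be the index with $\pi(J(i))=\pi(i)-1$. The sites of $\pi$ are the site before $\pi(1)$ and the site after $\pi(i)$ for each $i\in[n]$. The site before $\pi(1)$ is $\eta$-active; the site after $\pi(i)$ is $\eta$-active iff $J(i)<i$, or $i<n$ and $\pi(i)<\pi(i+1)$. A site that is not $\eta$-active is $\eta$-inactive. An ascent sequence of length $n$ is a sequence $x(1)\cdots x(n)$ of positive integers with $x(1)=1$ and $x(i+1)\le 2+\mathrm{asc}(x(1)\cdots x(i))$ for each $i\in[n-1]$, where $\mathrm{asc}(w)$ is the number of indices $k$ with $w(k)<w(k+1)$. An ascent sequence is primitive if it has no flat step, i.e. no $i$ with $x(i)=x(i+1)$. *)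

theory Defs
  imports "HOL-Combinatorics.Permutations"
begin

definition J :: "(nat \<Rightarrow> nat) \<Rightarrow> nat \<Rightarrow> nat \<Rightarrow> nat" where
  "J p n i = (if p i = 1 then 0 else (THE j. j \<in> {1..n} \<and> p j = p i - 1))"

definition eta_active_after :: "(nat \<Rightarrow> nat) \<Rightarrow> nat \<Rightarrow> nat \<Rightarrow> bool" where
  "eta_active_after p n i \<longleftrightarrow> J p n i < i \<or> (i < n \<and> p i < p (i + 1))"

text \<open>No eta-inactive site: the site before p(1) is always active, so it suffices
  that every site after p(i), i in [n], is active.\<close>
definition no_eta_inactive :: "(nat \<Rightarrow> nat) \<Rightarrow> nat \<Rightarrow> bool" where
  "no_eta_inactive p n \<longleftrightarrow> (\<forall>i\<in>{1..n}. eta_active_after p n i)"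

definition perms_no_inactive :: "nat \<Rightarrow> (nat \<Rightarrow> nat) set" where
  "perms_no_inactive n = {p. p permutes {1..n} \<and> no_eta_inactive p n}"

text \<open>Sequences are lists; the paper's x(k) is x ! (k - 1).\<close>
definition asc :: "nat list \<Rightarrow> nat" where
  "asc w = card {k. k + 1 < length w \<and> w ! k < w ! (k + 1)}"

definition ascent_seq :: "nat list \<Rightarrow> bool" where
  "ascent_seq x \<longleftrightarrow> x \<noteq> [] \<and> x ! 0 = 1 \<and> (\<forall>k < length x. 1 \<le> x ! k) \<and>
     (\<forall>i. i + 1 < length x \<longrightarrow> x ! (i + 1) \<le> 2 + asc (take (i + 1) x))"

definition primitive :: "nat list \<Rightarrow> bool" where
  "primitive x \<longleftrightarrow> (\<forall>i. i + 1 < length x \<longrightarrow> x ! i \<noteq> x ! (i + 1))"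

definition prim_ascent_seqs :: "nat \<Rightarrow> nat list set" where
  "prim_ascent_seqs n = {x. length x = n \<and> ascent_seq x \<and> primitive x}"

end

theory Submission
  imports Defs
begin

text \<open>Deleting the last entry organises both families into generating trees rooted at level 1.
  A primitive ascent sequence y has the children y v with v \<in> {1, ..., asc y + 2} - {last y}.
  A permutation q of [n] without eta-inactive sites has as children the permutations obtained
  by appending a value v and raising the entries \<ge> v by one; the result again has no
  eta-inactive site iff v = n + 1 or v is an ascent bottom of q.
  Label a sequence y by (asc y, last y - 1) and a permutation q by the pair (number of ascents,
  number of ascent bottoms below the last entry). In both trees a node labelled (a, b) then has
  a + 1 children, labelled (a, j) for j < b and (a + 1, j + 1) for b \<le> j \<le> a. Generating
  trees with the same succession rule and isomorphic first levels are isomorphic level by level.\<close>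

section \<open>Generating trees\<close>

lemma bij_betw_Sigma:
  assumes g: "bij_betw g A A'" and h: "\<And>a. a \<in> A \<Longrightarrow> bij_betw (h a) (B a) (B' (g a))"
  shows "bij_betw (\<lambda>(a, b). (g a, h a b)) (Sigma A B) (Sigma A' B')"
proof (rule bij_betw_imageI)
  show "inj_on (\<lambda>(a, b). (g a, h a b)) (Sigma A B)"
  proof (rule inj_onI, clarify)
    fix a b a' b'
    assume ab: "a \<in> A" "b \<in> B a" "a' \<in> A" "b' \<in> B a'"
      and eq: "g a = g a'" "h a b = h a' b'"
    then have "a = a'"
      using g by (auto simp: bij_betw_def dest: inj_onD)
    moreover from this have "b = b'"
      using h[of a] ab eq by (auto simp: bij_betw_def dest: inj_onD)
    ultimately show "a = a' \<and> b = b'" ..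
  qed
  show "(\<lambda>(a, b). (g a, h a b)) ` Sigma A B = Sigma A' B'"
  proof
    show "(\<lambda>(a, b). (g a, h a b)) ` Sigma A B \<subseteq> Sigma A' B'"
      using bij_betw_apply[OF g] bij_betw_apply[OF h] by auto
    show "Sigma A' B' \<subseteq> (\<lambda>(a, b). (g a, h a b)) ` Sigma A B"
    proof clarify
      fix a' b' assume a': "a' \<in> A'" and b': "b' \<in> B' a'"
      then obtain a where a: "a \<in> A" "g a = a'"
        using g by (auto simp: bij_betw_def)
      then obtain b where "b \<in> B a" "h a b = b'"
        using h[OF a(1)] b' a(2) by (metis bij_betw_def imageE)
      with a show "(a', b') \<in> (\<lambda>(a, b). (g a, h a b)) ` Sigma A B"
        by (intro image_eqI[of _ _ "(a, b)"]) auto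
    qed
  qed
qed

lemma card_less_le_card_less_iff:
  fixes B :: "'a::linorder set"
  assumes "finite B" and "u \<in> B"
  shows "card {b \<in> B. b < w} \<le> card {b \<in> B. b < u} \<longleftrightarrow> w \<le> u"
proof
  assume "w \<le> u"
  then show "card {b \<in> B. b < w} \<le> card {b \<in> B. b < u}"
    using assms(1) by (intro card_mono) auto
next
  assume le: "card {b \<in> B. b < w} \<le> card {b \<in> B. b < u}"
  show "w \<le> u"
  proof (rule ccontr)
    assume "\<not> w \<le> u"
    then have "u < w" by simp
    then have "{b \<in> B. b < u} \<subset> {b \<in> B. b < w}"
      using assms(2) by (blast intro: less_trans)
    then have "card {b \<in> B. b < u} < card {b \<in> B. b < w}"
      using assms(1) by (simp add: psubset_card_mono)
    then show False
      using le by simp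
  qed
qed

lemma bij_betw_card_less:
  fixes B :: "'a::linorder set"
  assumes "finite B"
  shows "bij_betw (\<lambda>v. card {b \<in> B. b < v}) B {..<card B}"
proof -
  have inj: "inj_on (\<lambda>v. card {b \<in> B. b < v}) B"
  proof (rule inj_onI)
    fix u w assume "u \<in> B" "w \<in> B" and eq: "card {b \<in> B. b < u} = card {b \<in> B. b < w}"
    have "w \<le> u"
      using card_less_le_card_less_iff[OF assms \<open>u \<in> B\<close>, of w] eq by simp
    moreover have "u \<le> w"
      using card_less_le_card_less_iff[OF assms \<open>w \<in> B\<close>, of u] eq by simp
    ultimately show "u = w" by simp
  qed
  have "card {b \<in> B. b < v} < card B" if "v \<in> B" for v
    using that assms by (intro psubset_card_mono) auto
  then have "(\<lambda>v. card {b \<in> B. b < v}) ` B \<subseteq> {..<card B}"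
    by auto
  moreover have "card ((\<lambda>v. card {b \<in> B. b < v}) ` B) = card {..<card B}"
    using card_image[OF inj] by simp
  ultimately show ?thesis
    using inj by (simp add: bij_betw_def card_subset_eq)
qed

locale generating_tree =
  fixes slots :: "'l \<Rightarrow> 'i set" and succ :: "'l \<Rightarrow> 'i \<Rightarrow> 'l"
    and level :: "nat \<Rightarrow> 'a set" and parent :: "nat \<Rightarrow> 'a \<Rightarrow> 'a"
    and slot :: "nat \<Rightarrow> 'a \<Rightarrow> 'i" and label :: "nat \<Rightarrow> 'a \<Rightarrow> 'l"
  assumes bij_betw_parent_slot: "1 \<le> n \<Longrightarrow>
      bij_betw (\<lambda>x. (parent n x, slot n x)) (level (Suc n)) (SIGMA y:level n. slots (label n y))"
    and label_Suc: "1 \<le> n \<Longrightarrow> x \<in> level (Suc n) \<Longrightarrow>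
      label (Suc n) x = succ (label n (parent n x)) (slot n x)"

lemma generating_tree_iso:
  assumes S: "generating_tree slots succ S pS iS LS"
    and T: "generating_tree slots succ T pT iT LT"
    and root: "bij_betw g (S 1) (T 1)" "\<And>x. x \<in> S 1 \<Longrightarrow> LT 1 (g x) = LS 1 x"
    and "1 \<le> n"
  shows "\<exists>g. bij_betw g (S n) (T n) \<and> (\<forall>x\<in>S n. LT n (g x) = LS n x)"
  using \<open>1 \<le> n\<close>
proof (induction n rule: dec_induct)
  case base
  then show ?case using root by blast
next
  case (step n)
  then obtain g where g: "bij_betw g (S n) (T n)" and g_label: "\<forall>x\<in>S n. LT n (g x) = LS n x"
    by blast
  let ?split_S = "\<lambda>x. (pS n x, iS n x)" and ?split_T = "\<lambda>z. (pT n z, iT n z)"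
  let ?move = "\<lambda>(y, j). (g y, j)"
  define h where "h = the_inv_into (T (Suc n)) ?split_T \<circ> (?move \<circ> ?split_S)"
  have split_S: "bij_betw ?split_S (S (Suc n)) (SIGMA y:S n. slots (LS n y))"
    and split_T: "bij_betw ?split_T (T (Suc n)) (SIGMA z:T n. slots (LT n z))"
    using generating_tree.bij_betw_parent_slot[OF S step(1)]
      generating_tree.bij_betw_parent_slot[OF T step(1)] .
  have move: "bij_betw ?move (SIGMA y:S n. slots (LS n y)) (SIGMA z:T n. slots (LT n z))"
    by (rule bij_betw_Sigma[OF g]) (simp add: g_label bij_betw_def)
  have h: "bij_betw h (S (Suc n)) (T (Suc n))"
    unfolding h_def
    by (intro bij_betw_trans[OF bij_betw_trans[OF split_S move]] bij_betw_the_inv_into split_T)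
  have "LT (Suc n) (h x) = LS (Suc n) x" if x: "x \<in> S (Suc n)" for x
  proof -
    have parent: "pS n x \<in> S n"
      using bij_betw_apply[OF split_S x] by auto
    have "?move (?split_S x) \<in> (SIGMA z:T n. slots (LT n z))"
      using bij_betw_apply[OF move bij_betw_apply[OF split_S x]] .
    then have "?split_T (h x) = (g (pS n x), iS n x)"
      unfolding h_def comp_def using f_the_inv_into_f_bij_betw[OF split_T] by simp
    then have "LT (Suc n) (h x) = succ (LT n (g (pS n x))) (iS n x)"
      using generating_tree.label_Suc[OF T step(1) bij_betw_apply[OF h x]] by simp
    also have "\<dots> = LS (Suc n) x"
      using generating_tree.label_Suc[OF S step(1) x] g_label parent by simp
    finally show ?thesis .
  qed
  then show ?case using h by blast
qed

definition succ_label :: "nat \<times> nat \<Rightarrow> nat \<Rightarrow> nat \<times> nat" where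
  "succ_label l j = (if snd l \<le> j then (Suc (fst l), Suc j) else (fst l, j))"

section \<open>Primitive ascent sequences\<close>

lemma asc_snoc:
  assumes "w \<noteq> []"
  shows "asc (w @ [v]) = asc w + (if last w < v then 1 else 0)"
proof -
  obtain m where m: "length w = Suc m"
    using assms by (cases w) auto
  let ?A = "{k. k + 1 < length w \<and> w ! k < w ! (k + 1)}"
  let ?new = "if last w < v then {m} else {}"
  have "{k. k + 1 < length (w @ [v]) \<and> (w @ [v]) ! k < (w @ [v]) ! (k + 1)} = ?A \<union> ?new"
    using assms m by (auto simp: nth_append last_conv_nth less_Suc_eq)
  moreover have "finite ?A"
    by (rule finite_subset[of _ "{..<length w}"]) auto
  ultimately show ?thesis
    unfolding asc_def using m by simp
qed

lemma ascent_seq_singleton: "ascent_seq [v] \<longleftrightarrow> v = 1"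
  by (auto simp: ascent_seq_def)

lemma ascent_seq_snoc:
  assumes "y \<noteq> []"
  shows "ascent_seq (y @ [v]) \<longleftrightarrow> ascent_seq y \<and> 1 \<le> v \<and> v \<le> asc y + 2"
proof -
  obtain m where m: "length y = Suc m"
    using assms by (cases y) auto
  have bound: "(\<forall>i. i + 1 < length (y @ [v]) \<longrightarrow> (y @ [v]) ! (i + 1) \<le> 2 + asc (take (i + 1) (y @ [v])))
      \<longleftrightarrow> (\<forall>i. i + 1 < length y \<longrightarrow> y ! (i + 1) \<le> 2 + asc (take (i + 1) y)) \<and> v \<le> asc y + 2"
    using m by (auto simp: nth_append less_Suc_eq)
  have positive: "(\<forall>k < length (y @ [v]). 1 \<le> (y @ [v]) ! k) \<longleftrightarrow> (\<forall>k < length y. 1 \<le> y ! k) \<and> 1 \<le> v"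
    by (auto simp: nth_append less_Suc_eq)
  show ?thesis
    using assms bound positive by (auto simp: ascent_seq_def nth_append)
qed

lemma primitive_snoc:
  assumes "y \<noteq> []"
  shows "primitive (y @ [v]) \<longleftrightarrow> primitive y \<and> last y \<noteq> v"
proof -
  obtain m where m: "length y = Suc m"
    using assms by (cases y) auto
  then show ?thesis
    using assms by (auto simp: primitive_def nth_append last_conv_nth less_Suc_eq)
qed

lemma ascent_seq_last_bounds:
  assumes "ascent_seq x"
  shows "1 \<le> last x \<and> last x \<le> asc x + 1"
  using assms
proof (induction x rule: rev_induct)
  case Nil
  then show ?case by (simp add: ascent_seq_def)
next
  case (snoc v y)
  show ?case
  proof (cases "y = []")
    case True
    then show ?thesis
      using snoc.prems by (simp add: ascent_seq_singleton asc_def)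
  next
    case False
    then show ?thesis
      using snoc by (auto simp: ascent_seq_snoc asc_snoc)
  qed
qed

lemma prim_ascent_seqs_snoc:
  assumes "y \<noteq> []"
  shows "y @ [v] \<in> prim_ascent_seqs (Suc n) \<longleftrightarrow> y \<in> prim_ascent_seqs n \<and> v \<in> {1..asc y + 2} - {last y}"
  using assms by (auto simp: prim_ascent_seqs_def ascent_seq_snoc primitive_snoc)

lemma prim_ascent_seqs_one: "prim_ascent_seqs 1 = {[1]}"
proof -
  have "x \<in> prim_ascent_seqs 1 \<longleftrightarrow> x = [1]" for x
    by (cases x) (auto simp: prim_ascent_seqs_def ascent_seq_singleton primitive_def)
  then show ?thesis by blast
qed

lemma prim_ascent_seqs_SucE:
  assumes "x \<in> prim_ascent_seqs (Suc n)" and "1 \<le> n"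
  obtains y v where "x = y @ [v]" "y \<in> prim_ascent_seqs n" "v \<in> {1..asc y + 2} - {last y}"
proof -
  have "length x = Suc n"
    using assms(1) by (simp add: prim_ascent_seqs_def)
  then have "butlast x \<noteq> []" and x: "x = butlast x @ [last x]"
    using assms(2) by (auto simp flip: length_0_conv)
  with assms(1) show thesis
    using prim_ascent_seqs_snoc[of "butlast x" "last x" n] that by simp
qed

text \<open>The position of v, counted from 0, in the increasing enumeration of {1, 2, ...} - {c}.\<close>
definition value_slot :: "nat \<Rightarrow> nat \<Rightarrow> nat" where
  "value_slot c v = (if v < c then v - 1 else v - 2)"

lemma bij_betw_value_slot:
  assumes "1 \<le> c" and "c \<le> a + 1"
  shows "bij_betw (value_slot c) ({1..a + 2} - {c}) {..a}"
  by (rule bij_betw_byWitness[where f' = "\<lambda>j. if j + 1 < c then j + 1 else j + 2"])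
    (use assms in \<open>auto simp: value_slot_def\<close>)

lemma bij_betw_butlast_last:
  assumes "1 \<le> n"
  shows "bij_betw (\<lambda>x. (butlast x, last x)) (prim_ascent_seqs (Suc n))
     (SIGMA y:prim_ascent_seqs n. {1..asc y + 2} - {last y})"
proof (rule bij_betw_byWitness[where f' = "\<lambda>(y, v). y @ [v]"])
  show "\<forall>x \<in> prim_ascent_seqs (Suc n). (\<lambda>(y, v). y @ [v]) (butlast x, last x) = x"
    by (auto simp: prim_ascent_seqs_def ascent_seq_def)
  show "\<forall>yv \<in> (SIGMA y:prim_ascent_seqs n. {1..asc y + 2} - {last y}).
      (\<lambda>x. (butlast x, last x)) ((\<lambda>(y, v). y @ [v]) yv) = yv"
    by auto
  show "(\<lambda>x. (butlast x, last x)) ` prim_ascent_seqs (Suc n)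
      \<subseteq> (SIGMA y:prim_ascent_seqs n. {1..asc y + 2} - {last y})"
  proof (rule image_subsetI)
    fix x assume "x \<in> prim_ascent_seqs (Suc n)"
    then obtain y v where "x = y @ [v]" "y \<in> prim_ascent_seqs n" "v \<in> {1..asc y + 2} - {last y}"
      using prim_ascent_seqs_SucE assms by blast
    then show "(butlast x, last x) \<in> (SIGMA y:prim_ascent_seqs n. {1..asc y + 2} - {last y})"
      by simp
  qed
  show "(\<lambda>(y, v). y @ [v]) ` (SIGMA y:prim_ascent_seqs n. {1..asc y + 2} - {last y})
      \<subseteq> prim_ascent_seqs (Suc n)"
  proof (rule image_subsetI, elim SigmaE)
    fix yv y v
    assume y: "y \<in> prim_ascent_seqs n" and v: "v \<in> {1..asc y + 2} - {last y}" and yv: "yv = (y, v)"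
    have "y \<noteq> []"
      using y by (simp add: prim_ascent_seqs_def ascent_seq_def)
    then show "(case yv of (y, v) \<Rightarrow> y @ [v]) \<in> prim_ascent_seqs (Suc n)"
      using prim_ascent_seqs_snoc y v yv by simp
  qed
qed

lemma generating_tree_prim_ascent_seqs:
  "generating_tree (\<lambda>l. {..fst l}) succ_label prim_ascent_seqs (\<lambda>_. butlast)
     (\<lambda>_ x. value_slot (last (butlast x)) (last x)) (\<lambda>_ x. (asc x, last x - 1))"
proof
  fix n :: nat assume n: "1 \<le> n"
  have "bij_betw (\<lambda>(y, v). (y, value_slot (last y) v))
      (SIGMA y:prim_ascent_seqs n. {1..asc y + 2} - {last y}) (SIGMA y:prim_ascent_seqs n. {..asc y})"
  proof (rule bij_betw_Sigma[where g = "\<lambda>y. y"])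
    show "bij_betw (\<lambda>y. y) (prim_ascent_seqs n) (prim_ascent_seqs n)"
      by (simp add: bij_betw_def)
    fix y assume "y \<in> prim_ascent_seqs n"
    then have "1 \<le> last y \<and> last y \<le> asc y + 1"
      using ascent_seq_last_bounds by (simp add: prim_ascent_seqs_def)
    then show "bij_betw (value_slot (last y)) ({1..asc y + 2} - {last y}) {..asc y}"
      using bij_betw_value_slot by blast
  qed
  from bij_betw_trans[OF bij_betw_butlast_last[OF n] this]
  show "bij_betw (\<lambda>x. (butlast x, value_slot (last (butlast x)) (last x))) (prim_ascent_seqs (Suc n))
      (SIGMA y:prim_ascent_seqs n. {..fst (asc y, last y - 1)})"
    by (simp add: comp_def)
  fix x assume "x \<in> prim_ascent_seqs (Suc n)"
  then obtain y v where x: "x = y @ [v]" and y: "y \<in> prim_ascent_seqs n"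
    and v: "v \<in> {1..asc y + 2} - {last y}"
    using prim_ascent_seqs_SucE n by blast
  have "y \<noteq> []" and "1 \<le> last y"
    using y ascent_seq_last_bounds by (auto simp: prim_ascent_seqs_def ascent_seq_def)
  then show "(asc x, last x - 1) =
      succ_label (asc (butlast x), last (butlast x) - 1) (value_slot (last (butlast x)) (last x))"
    using x v by (auto simp: asc_snoc succ_label_def value_slot_def)
qed

section \<open>Permutations without eta-inactive sites\<close>

definition pred_before :: "(nat \<Rightarrow> nat) \<Rightarrow> nat \<Rightarrow> bool" where
  "pred_before p i \<longleftrightarrow> p i = 1 \<or> (\<exists>j\<in>{1..<i}. p j + 1 = p i)"

lemma J_less_iff_pred_before:
  assumes p: "p permutes {1..n}" and i: "i \<in> {1..n}"
  shows "J p n i < i \<longleftrightarrow> pred_before p i"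
proof (cases "p i = 1")
  case True
  then show ?thesis
    using i by (simp add: J_def pred_before_def)
next
  case False
  let ?j = "inv p (p i - 1)"
  have "p i \<in> {1..n}"
    using i permutes_in_image[OF p] by blast
  with False have "p i - 1 \<in> {1..n}"
    by auto
  then have j: "?j \<in> {1..n}" "p ?j = p i - 1"
    using permutes_in_image[OF permutes_inv[OF p]] permutes_inverses(1)[OF p] by blast+
  have pred_iff: "p k = p i - 1 \<longleftrightarrow> k = ?j" for k
    using permutes_inv_eq[OF p, of "p i - 1" k] by auto
  have "(THE k. k \<in> {1..n} \<and> p k = p i - 1) = ?j"
    by (rule the_equality) (use j pred_iff in auto)
  then have "J p n i = ?j"
    using False by (simp add: J_def)
  moreover have "p k + 1 = p i \<longleftrightarrow> k = ?j" for k
  proof -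
    have "p k + 1 = p i \<longleftrightarrow> p k = p i - 1"
      using \<open>p i \<in> {1..n}\<close> by auto
    then show ?thesis
      using pred_iff by blast
  qed
  then have "pred_before p i \<longleftrightarrow> ?j \<in> {1..<i}"
    using False by (auto simp: pred_before_def)
  ultimately show ?thesis
    using j by auto
qed

lemma no_eta_inactive_iff:
  assumes "p permutes {1..n}"
  shows "no_eta_inactive p n \<longleftrightarrow> (\<forall>i\<in>{1..n}. pred_before p i \<or> (i < n \<and> p i < p (Suc i)))"
  using J_less_iff_pred_before[OF assms] by (simp add: no_eta_inactive_def eta_active_after_def)

lemma pred_before_last:
  assumes q: "q permutes {1..n}" and "1 \<le> n"
  shows "pred_before q n"
proof (cases "q n = 1")
  case True
  then show ?thesis by (simp add: pred_before_def)
next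
  case False
  let ?j = "inv q (q n - 1)"
  have "q n \<in> {1..n}"
    using assms permutes_in_image[OF q] by auto
  with False have "q n - 1 \<in> {1..n}"
    by auto
  then have "?j \<in> {1..n}" "q ?j = q n - 1"
    using permutes_in_image[OF permutes_inv[OF q]] permutes_inverses(1)[OF q] by blast+
  moreover from this have "?j \<noteq> n"
    using False \<open>q n \<in> {1..n}\<close> by auto
  ultimately show ?thesis
    unfolding pred_before_def using \<open>q n \<in> {1..n}\<close> by (intro disjI2 bexI[of _ ?j]) auto
qed

definition shift_up :: "nat \<Rightarrow> nat \<Rightarrow> nat" where
  "shift_up v a = (if v \<le> a then Suc a else a)"

lemma shift_up_less_iff [simp]: "shift_up v a < shift_up v b \<longleftrightarrow> a < b"
  by (simp add: shift_up_def)

lemma shift_up_less_self_iff [simp]: "shift_up v a < v \<longleftrightarrow> a < v"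
  by (simp add: shift_up_def)

lemma shift_up_eq_iff [simp]: "shift_up v a = shift_up v b \<longleftrightarrow> a = b"
  by (auto simp add: shift_up_def)

lemma shift_up_neq_self [simp]: "shift_up v a \<noteq> v"
  by (simp add: shift_up_def)

lemma Suc_shift_up_eq_iff: "Suc (shift_up v a) = shift_up v b \<longleftrightarrow> Suc a = b \<and> b \<noteq> v"
  by (auto simp add: shift_up_def)

definition perm_extend :: "nat \<Rightarrow> (nat \<Rightarrow> nat) \<Rightarrow> nat \<Rightarrow> nat \<Rightarrow> nat" where
  "perm_extend n q v i = (if i \<in> {1..n} then shift_up v (q i) else if i = Suc n then v else i)"

definition perm_restrict :: "nat \<Rightarrow> (nat \<Rightarrow> nat) \<Rightarrow> nat \<Rightarrow> nat" where
  "perm_restrict n p i = (if i \<in> {1..n} then (if p (Suc n) < p i then p i - 1 else p i) else i)"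

lemma perm_extend_in [simp]: "i \<in> {1..n} \<Longrightarrow> perm_extend n q v i = shift_up v (q i)"
  by (simp add: perm_extend_def)

lemma perm_extend_Suc [simp]: "perm_extend n q v (Suc n) = v"
  by (simp add: perm_extend_def)

lemma perm_extend_permutes:
  assumes q: "q permutes {1..n}" and v: "v \<in> {1..Suc n}"
  shows "perm_extend n q v permutes {1..Suc n}"
proof (rule inj_imp_permutes)
  have q_in: "q i \<in> {1..n}" if "i \<in> {1..n}" for i
    using that permutes_in_image[OF q] by blast
  show "inj_on (perm_extend n q v) {1..Suc n}"
  proof (rule inj_onI)
    fix i k assume i: "i \<in> {1..Suc n}" and k: "k \<in> {1..Suc n}"
      and eq: "perm_extend n q v i = perm_extend n q v k"
    show "i = k"
    proof (cases "i = Suc n \<or> k = Suc n")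
      case True
      with i k eq show ?thesis
        by (metis atLeastAtMost_iff le_Suc_eq perm_extend_Suc perm_extend_in shift_up_neq_self)
    next
      case False
      with i k have "i \<in> {1..n}" "k \<in> {1..n}"
        by auto
      with eq have "q i = q k"
        by simp
      then show ?thesis
        using permutes_inj[OF q] by (simp add: inj_eq)
    qed
  qed
  show "perm_extend n q v i \<in> {1..Suc n}" if "i \<in> {1..Suc n}" for i
    using that q_in[of i] v by (auto simp: perm_extend_def shift_up_def le_Suc_eq)
qed (auto simp: perm_extend_def)

lemma perm_restrict_permutes:
  assumes p: "p permutes {1..Suc n}"
  shows "perm_restrict n p permutes {1..n}"
proof (rule inj_imp_permutes)
  have p_in: "p i \<in> {1..Suc n}" if "i \<in> {1..Suc n}" for i
    using that permutes_in_image[OF p] by blast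
  have p_neq: "p i \<noteq> p (Suc n)" if "i \<in> {1..n}" for i
    using that permutes_inj[OF p] by (auto simp: inj_eq)
  show "inj_on (perm_restrict n p) {1..n}"
  proof (rule inj_onI)
    fix i k assume i: "i \<in> {1..n}" and k: "k \<in> {1..n}"
      and "perm_restrict n p i = perm_restrict n p k"
    then have "p i = p k"
      using p_neq[OF i] p_neq[OF k] p_in[of i] p_in[of k]
      by (auto simp: perm_restrict_def split: if_splits)
    then show "i = k"
      using permutes_inj[OF p] by (simp add: inj_eq)
  qed
  show "perm_restrict n p i \<in> {1..n}" if "i \<in> {1..n}" for i
    using that p_neq[of i] p_in[of i] p_in[of "Suc n"] by (auto simp: perm_restrict_def)
qed (auto simp: perm_restrict_def)

lemma perm_restrict_extend:
  assumes "q permutes {1..n}"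
  shows "perm_restrict n (perm_extend n q v) = q"
proof
  fix i
  show "perm_restrict n (perm_extend n q v) i = q i"
    using permutes_not_in[OF assms, of i] by (auto simp: perm_restrict_def shift_up_def)
qed

lemma perm_extend_restrict:
  assumes p: "p permutes {1..Suc n}"
  shows "perm_extend n (perm_restrict n p) (p (Suc n)) = p"
proof
  fix i
  have "p i \<noteq> p (Suc n)" if "i \<in> {1..n}"
    using that permutes_inj[OF p] by (auto simp: inj_eq)
  then show "perm_extend n (perm_restrict n p) (p (Suc n)) i = p i"
    using permutes_not_in[OF p, of i]
    by (auto simp: perm_extend_def perm_restrict_def shift_up_def)
qed

lemma pred_before_extend:
  assumes q: "q permutes {1..n}" and i: "i \<in> {1..n}" and v: "1 \<le> v"
  shows "pred_before (perm_extend n q v) i \<longleftrightarrow> pred_before q i \<and> q i \<noteq> v"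
proof -
  have "1 \<le> q i"
    using i permutes_in_image[OF q] by auto
  then have one: "shift_up v (q i) = 1 \<longleftrightarrow> q i = 1 \<and> q i \<noteq> v"
    using v by (auto simp: shift_up_def)
  have "perm_extend n q v j + 1 = perm_extend n q v i \<longleftrightarrow> q j + 1 = q i \<and> q i \<noteq> v"
    if "j \<in> {1..<i}" for j
    using that i Suc_shift_up_eq_iff[of v "q j" "q i"] by simp
  then show ?thesis
    using i one unfolding pred_before_def by auto
qed

definition ascents :: "nat \<Rightarrow> (nat \<Rightarrow> nat) \<Rightarrow> nat set" where
  "ascents n p = {k \<in> {1..<n}. p k < p (Suc k)}"

definition insertion_values :: "nat \<Rightarrow> (nat \<Rightarrow> nat) \<Rightarrow> nat set" where
  "insertion_values n q = insert (Suc n) (q ` ascents n q)"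

lemma insertion_values_iff:
  assumes q: "q permutes {1..n}" and "1 \<le> n" and v: "v \<in> {1..Suc n}"
  shows "v \<in> insertion_values n q \<longleftrightarrow> (\<forall>i\<in>{1..<n}. q i = v \<longrightarrow> q i < q (Suc i)) \<and> q n \<noteq> v"
proof
  have q_le: "q i \<le> n" if "i \<in> {1..n}" for i
    using that permutes_in_image[OF q] by auto
  assume "v \<in> insertion_values n q"
  then consider "v = Suc n" | k where "k \<in> ascents n q" "v = q k"
    unfolding insertion_values_def by auto
  then show "(\<forall>i\<in>{1..<n}. q i = v \<longrightarrow> q i < q (Suc i)) \<and> q n \<noteq> v"
  proof cases
    case 1
    then show ?thesis
      using q_le \<open>1 \<le> n\<close> by fastforce
  next
    case 2
    then show ?thesis
      using permutes_inj[OF q] by (auto simp: ascents_def inj_eq)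
  qed
next
  assume H: "(\<forall>i\<in>{1..<n}. q i = v \<longrightarrow> q i < q (Suc i)) \<and> q n \<noteq> v"
  show "v \<in> insertion_values n q"
  proof (cases "v = Suc n")
    case True
    then show ?thesis by (simp add: insertion_values_def)
  next
    case False
    with v have "v \<in> {1..n}"
      by auto
    then have k: "inv q v \<in> {1..n}" "q (inv q v) = v"
      using permutes_in_image[OF permutes_inv[OF q]] permutes_inverses(1)[OF q] by blast+
    moreover from k(2) H have "inv q v \<noteq> n"
      by auto
    ultimately have "inv q v \<in> {1..<n}"
      by auto
    with H k(2) have "inv q v \<in> ascents n q"
      unfolding ascents_def by auto
    then show ?thesis
      using k unfolding insertion_values_def by (metis image_eqI insertI2)
  qed
qed

lemma ascent_value_in:
  assumes "q permutes {1..n}" and "k \<in> ascents n q"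
  shows "q k \<in> {1..n}"
proof -
  from assms(2) have "k \<in> {1..n}"
    by (simp add: ascents_def)
  then show ?thesis
    using permutes_in_image[OF assms(1)] by blast
qed

lemma insertion_values_subset:
  assumes "q permutes {1..n}"
  shows "insertion_values n q \<subseteq> {1..Suc n}"
  using ascent_value_in[OF assms] by (force simp: insertion_values_def)

lemma no_eta_inactive_extend:
  assumes q: "q permutes {1..n}" and n: "1 \<le> n" and v: "v \<in> {1..Suc n}"
  shows "no_eta_inactive (perm_extend n q v) (Suc n) \<longleftrightarrow>
    no_eta_inactive q n \<and> v \<in> insertion_values n q"
proof -
  let ?p = "perm_extend n q v"
  have p: "?p permutes {1..Suc n}"
    using perm_extend_permutes[OF q v] .
  have split: "{1..Suc n} = {1..<n} \<union> {n, Suc n}" and split': "{1..n} = {1..<n} \<union> {n}"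
    using n by auto
  have pred_p: "pred_before ?p i \<longleftrightarrow> pred_before q i \<and> q i \<noteq> v" if "i \<in> {1..<n}" for i
    using pred_before_extend[OF q _, of i v] that v by simp
  have asc_p: "?p i < ?p (Suc i) \<longleftrightarrow> q i < q (Suc i)" if "i \<in> {1..<n}" for i
    using that by simp
  have "no_eta_inactive ?p (Suc n) \<longleftrightarrow>
      (\<forall>i\<in>{1..<n}. (pred_before q i \<and> q i \<noteq> v) \<or> q i < q (Suc i)) \<and> q n \<noteq> v"
  proof -
    have "pred_before ?p n \<longleftrightarrow> q n \<noteq> v"
      using pred_before_extend[OF q _, of n v] pred_before_last[OF q n] n v by simp
    moreover have "?p n < ?p (Suc n) \<longleftrightarrow> q n < v"
      using n by simp
    ultimately show ?thesis
      unfolding no_eta_inactive_iff[OF p] split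
      using pred_before_last[OF p] pred_p asc_p by auto
  qed
  moreover have "no_eta_inactive q n \<longleftrightarrow> (\<forall>i\<in>{1..<n}. pred_before q i \<or> q i < q (Suc i))"
    unfolding no_eta_inactive_iff[OF q] split' using pred_before_last[OF q n] by auto
  ultimately show ?thesis
    using insertion_values_iff[OF q n v] by blast
qed

definition perm_label :: "nat \<Rightarrow> (nat \<Rightarrow> nat) \<Rightarrow> nat \<times> nat" where
  "perm_label n p = (card (ascents n p), card {k \<in> ascents n p. p k < p n})"

definition perm_slot :: "nat \<Rightarrow> (nat \<Rightarrow> nat) \<Rightarrow> nat" where
  "perm_slot n p = card {k \<in> ascents n p. p k < p (Suc n)}"

lemma ascents_extend: "ascents n (perm_extend n q v) = ascents n q"
  unfolding ascents_def by (rule Collect_cong) auto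

lemma ascents_Suc:
  assumes "1 \<le> n"
  shows "ascents (Suc n) p = (if p n < p (Suc n) then insert n (ascents n p) else ascents n p)"
  using assms by (auto simp: ascents_def less_Suc_eq)

lemma perm_slot_extend: "perm_slot n (perm_extend n q v) = card {k \<in> ascents n q. q k < v}"
  unfolding perm_slot_def ascents_extend by (simp add: ascents_def cong: conj_cong)

lemma card_ascents_below:
  assumes q: "q permutes {1..n}" and "w \<le> Suc n"
  shows "card {k \<in> ascents n q. q k < w} = card {b \<in> insertion_values n q. b < w}"
proof -
  have "{b \<in> insertion_values n q. b < w} = q ` {k \<in> ascents n q. q k < w}"
    using assms(2) by (auto simp: insertion_values_def)
  moreover have "inj_on q {k \<in> ascents n q. q k < w}"
    using permutes_inj_on[OF q] .
  ultimately show ?thesis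
    by (simp add: card_image)
qed

lemma bij_betw_insertion_rank:
  assumes q: "q permutes {1..n}"
  shows "bij_betw (\<lambda>v. card {k \<in> ascents n q. q k < v}) (insertion_values n q) {..card (ascents n q)}"
proof -
  have fin: "finite (insertion_values n q)"
    by (simp add: insertion_values_def ascents_def)
  have "Suc n \<notin> q ` ascents n q"
    using ascent_value_in[OF q] by force
  then have "card (insertion_values n q) = Suc (card (ascents n q))"
    using card_image[OF permutes_inj_on[OF q]] by (simp add: insertion_values_def ascents_def)
  then have "bij_betw (\<lambda>v. card {b \<in> insertion_values n q. b < v}) (insertion_values n q)
      {..card (ascents n q)}"
    using bij_betw_card_less[OF fin] by (simp add: lessThan_Suc_atMost)
  moreover have "card {k \<in> ascents n q. q k < v} = card {b \<in> insertion_values n q. b < v}"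
    if "v \<in> insertion_values n q" for v
    using card_ascents_below[OF q] that insertion_values_subset[OF q] by auto
  ultimately show ?thesis
    by (subst bij_betw_cong) simp_all
qed

lemma perm_label_extend:
  assumes q: "q permutes {1..n}" and n: "1 \<le> n" and v: "v \<in> insertion_values n q"
  shows "perm_label (Suc n) (perm_extend n q v) =
    succ_label (perm_label n q) (card {k \<in> ascents n q. q k < v})"
proof -
  let ?p = "perm_extend n q v" and ?A = "ascents n q"
  let ?below = "\<lambda>w. card {k \<in> ?A. q k < w}"
  have v_le: "v \<le> Suc n" and q_n: "q n \<le> n" "q n \<noteq> v"
    using insertion_values_subset[OF q] v insertion_values_iff[OF q n] permutes_in_image[OF q, of n] n
    by auto
  have fin: "finite ?A" and n_notin: "n \<notin> ?A"
    by (simp_all add: ascents_def)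
  have asc: "ascents (Suc n) ?p = (if q n < v then insert n ?A else ?A)"
    using ascents_Suc[OF n, of ?p] n by (simp add: ascents_extend)
  have "ascents (Suc n) ?p \<subseteq> {1..n}"
    by (auto simp: ascents_def)
  then have "?p k < ?p (Suc n) \<longleftrightarrow> q k < v" if "k \<in> ascents (Suc n) ?p" for k
    using that by auto
  then have below: "{k \<in> ascents (Suc n) ?p. ?p k < ?p (Suc n)} = {k \<in> ascents (Suc n) ?p. q k < v}"
    by blast
  have "perm_label (Suc n) ?p =
      (if q n < v then (Suc (card ?A), Suc (?below v)) else (card ?A, ?below v))"
  proof (cases "q n < v")
    case True
    then have "{k \<in> ascents (Suc n) ?p. q k < v} = insert n {k \<in> ?A. q k < v}"
      using asc by auto
    then show ?thesis
      using True asc below fin n_notin by (simp add: perm_label_def)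
  next
    case False
    then show ?thesis
      using asc below by (simp add: perm_label_def)
  qed
  moreover have "q n < v \<longleftrightarrow> ?below (q n) \<le> ?below v"
  proof -
    have "finite (insertion_values n q)"
      using fin by (simp add: insertion_values_def)
    then have "?below (q n) \<le> ?below v \<longleftrightarrow> q n \<le> v"
      using card_less_le_card_less_iff[OF _ v, of "q n"] card_ascents_below[OF q] v_le q_n(1) by simp
    then show ?thesis
      using q_n(2) by auto
  qed
  ultimately show ?thesis
    by (simp add: perm_label_def succ_label_def)
qed

lemma perms_no_inactive_SucE:
  assumes "p \<in> perms_no_inactive (Suc n)" and "1 \<le> n"
  obtains q v where "p = perm_extend n q v" "q \<in> perms_no_inactive n" "v \<in> insertion_values n q"
proof -
  let ?q = "perm_restrict n p" and ?v = "p (Suc n)"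
  have p: "p permutes {1..Suc n}" and "no_eta_inactive p (Suc n)"
    using assms(1) by (simp_all add: perms_no_inactive_def)
  moreover have q: "?q permutes {1..n}" and v: "?v \<in> {1..Suc n}" and p_eq: "perm_extend n ?q ?v = p"
    using perm_restrict_permutes[OF p] permutes_in_image[OF p] perm_extend_restrict[OF p] by auto
  ultimately have "no_eta_inactive ?q n \<and> ?v \<in> insertion_values n ?q"
    using no_eta_inactive_extend[OF q assms(2) v] by simp
  then show thesis
    using that[of ?q ?v] q p_eq by (simp add: perms_no_inactive_def)
qed

lemma perm_extend_in_perms_no_inactive:
  assumes "q \<in> perms_no_inactive n" and "1 \<le> n" and "v \<in> insertion_values n q"
  shows "perm_extend n q v \<in> perms_no_inactive (Suc n)"
proof -
  have q: "q permutes {1..n}" and "no_eta_inactive q n"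
    using assms(1) by (simp_all add: perms_no_inactive_def)
  moreover have v: "v \<in> {1..Suc n}"
    using insertion_values_subset[OF q] assms(3) by blast
  ultimately show ?thesis
    using perm_extend_permutes[OF q v] no_eta_inactive_extend[OF q assms(2) v] assms(3)
    by (simp add: perms_no_inactive_def)
qed

lemma bij_betw_restrict_last:
  assumes "1 \<le> n"
  shows "bij_betw (\<lambda>p. (perm_restrict n p, p (Suc n))) (perms_no_inactive (Suc n))
     (SIGMA q:perms_no_inactive n. insertion_values n q)"
proof (rule bij_betw_byWitness[where f' = "\<lambda>(q, v). perm_extend n q v"])
  show "\<forall>p \<in> perms_no_inactive (Suc n). (\<lambda>(q, v). perm_extend n q v) (perm_restrict n p, p (Suc n)) = p"
    by (simp add: perms_no_inactive_def perm_extend_restrict)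
  show "\<forall>qv \<in> (SIGMA q:perms_no_inactive n. insertion_values n q).
      (\<lambda>p. (perm_restrict n p, p (Suc n))) ((\<lambda>(q, v). perm_extend n q v) qv) = qv"
    by (auto simp: perms_no_inactive_def perm_restrict_extend)
  show "(\<lambda>p. (perm_restrict n p, p (Suc n))) ` perms_no_inactive (Suc n)
      \<subseteq> (SIGMA q:perms_no_inactive n. insertion_values n q)"
  proof (rule image_subsetI)
    fix p assume "p \<in> perms_no_inactive (Suc n)"
    then obtain q v where "p = perm_extend n q v" "q \<in> perms_no_inactive n" "v \<in> insertion_values n q"
      using perms_no_inactive_SucE assms by blast
    then show "(perm_restrict n p, p (Suc n)) \<in> (SIGMA q:perms_no_inactive n. insertion_values n q)"
      by (simp add: perms_no_inactive_def perm_restrict_extend)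
  qed
  show "(\<lambda>(q, v). perm_extend n q v) ` (SIGMA q:perms_no_inactive n. insertion_values n q)
      \<subseteq> perms_no_inactive (Suc n)"
    using perm_extend_in_perms_no_inactive[OF _ assms] by auto
qed

lemma generating_tree_perms_no_inactive:
  "generating_tree (\<lambda>l. {..fst l}) succ_label perms_no_inactive perm_restrict perm_slot perm_label"
proof
  fix n :: nat assume n: "1 \<le> n"
  have "bij_betw (\<lambda>(q, v). (q, card {k \<in> ascents n q. q k < v}))
      (SIGMA q:perms_no_inactive n. insertion_values n q)
      (SIGMA q:perms_no_inactive n. {..fst (perm_label n q)})"
  proof (rule bij_betw_Sigma[where g = "\<lambda>q. q"])
    show "bij_betw (\<lambda>q. q) (perms_no_inactive n) (perms_no_inactive n)"
      by (simp add: bij_betw_def)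
    fix q assume "q \<in> perms_no_inactive n"
    then show "bij_betw (\<lambda>v. card {k \<in> ascents n q. q k < v}) (insertion_values n q)
        {..fst (perm_label n q)}"
      using bij_betw_insertion_rank by (simp add: perms_no_inactive_def perm_label_def)
  qed
  from bij_betw_trans[OF bij_betw_restrict_last[OF n] this]
  have "bij_betw (\<lambda>p. (perm_restrict n p, card {k \<in> ascents n (perm_restrict n p).
      perm_restrict n p k < p (Suc n)})) (perms_no_inactive (Suc n))
      (SIGMA q:perms_no_inactive n. {..fst (perm_label n q)})"
    by (simp add: comp_def)
  moreover have "perm_slot n p = card {k \<in> ascents n (perm_restrict n p). perm_restrict n p k < p (Suc n)}"
    if p: "p \<in> perms_no_inactive (Suc n)" for p
  proof -
    obtain q v where "p = perm_extend n q v" and "q \<in> perms_no_inactive n"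
      and "v \<in> insertion_values n q"
      using perms_no_inactive_SucE[OF p n] by blast
    then show ?thesis
      by (simp add: perms_no_inactive_def perm_restrict_extend perm_slot_extend)
  qed
  ultimately show "bij_betw (\<lambda>p. (perm_restrict n p, perm_slot n p)) (perms_no_inactive (Suc n))
      (SIGMA q:perms_no_inactive n. {..fst (perm_label n q)})"
    by (subst bij_betw_cong) simp_all
  fix p assume "p \<in> perms_no_inactive (Suc n)"
  then obtain q v where "p = perm_extend n q v" "q \<in> perms_no_inactive n" "v \<in> insertion_values n q"
    using perms_no_inactive_SucE n by blast
  then show "perm_label (Suc n) p = succ_label (perm_label n (perm_restrict n p)) (perm_slot n p)"
    using perm_label_extend[OF _ n] by (simp add: perms_no_inactive_def perm_restrict_extend perm_slot_extend)
qed

lemma perms_no_inactive_one: "perms_no_inactive 1 = {id}"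
proof -
  have "no_eta_inactive id 1"
    by (simp add: no_eta_inactive_def eta_active_after_def J_def)
  moreover have "p permutes {1..1} \<longleftrightarrow> p = id" for p :: "nat \<Rightarrow> nat"
    by simp
  ultimately show ?thesis
    unfolding perms_no_inactive_def by blast
qed

theorem theorem7p10:
  fixes n :: nat
  assumes "n \<ge> 1"
  shows "\<exists>f. bij_betw f (perms_no_inactive n) (prim_ascent_seqs n)"
proof -
  have root: "bij_betw (\<lambda>_. [1]) (perms_no_inactive 1) (prim_ascent_seqs 1)"
    unfolding perms_no_inactive_one prim_ascent_seqs_one by (simp add: bij_betw_def)
  have root_label: "(asc [1], last [1] - 1) = perm_label 1 p" for p
    by (simp add: asc_def perm_label_def ascents_def)
  show ?thesis
    using generating_tree_iso[OF generating_tree_perms_no_inactive generating_tree_prim_ascent_seqs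
        root root_label assms]
    by blast
qed

end
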